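(* For every team $R$ of three robots, the Equivalent Oscillation problem $EqOsc$ is solvable by $R$ in the model $\mathcal{FCOM}$ under the fully synchronous scheduler with limited visibility, i.e. $EqOsc\in Task(\mathcal{FCOM}, FSYNCH, \mathcal{L.V.}; R)$.
   Context: Robots are anonymous, identical, autonomous points in the Euclidean plane. Each has its own local coordinate system, with no common chirality. Robots operate in Look-Compute-Move cycles: an instantaneous snapshot of visible robot positions and lights, a computation of a destination and light color, then a move. In $\mathcal{FCOM}$, each robot has a light with colors from a finite set, set at the end of Compute and visible only to other robots; a robot does not see its own light and is otherwise oblivious. Under the fully synchronous scheduler, all robots are activated in every round. Under limited visibility, a robot sees only robots (and their lights) within a fixed distance $V_r$ (same for all robots) of its current position, and the initial visibility graph (robots adjacent iff they see each other) is connected. Problem Equivalent Oscillation ($EqOsc$): three robots $r_1,r_2,r_3$ are initially at collinear points $B,A,C$ respectively, with $AB=AC=d$. Let $B',C'$ be the points on this line (on segments $AB$, $AC$) with $AB'=AC'=\frac{2d}{3}$. The robots $r_1$ and $r_3$ must always be equidistant from $r_2$ (which is at $A$). They must also oscillate: if at some round $t$, $r_1,r_3$ are at $B,C$, then at some round $t'>t$ they are at $B',C'$; and if at round $t'$ they are at $B',C'$, then at some round $t''>t'$ they are at $B,C$. *)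

theory Defs
  imports Complex_Main "HOL-Library.Multiset"
begin

text \<open>The Euclidean plane is modelled by the complex numbers. Robots are indexed
  0, 1, 2 (r1, r2, r3). Colours are natural numbers; an algorithm uses a finite
  set of them.\<close>

definition robots :: "nat set" where
  "robots = {0, 1, 2}"

text \<open>A local coordinate system: a similarity of the plane, given by a nonzero
  complex factor a (rotation and unit of length), an origin o, and a flag telling
  whether the handedness (chirality) is reversed.\<close>

type_synonym frame = "complex \<times> complex \<times> bool"

definition frame_ok :: "frame \<Rightarrow> bool" where
  "frame_ok F \<longleftrightarrow> fst F \<noteq> 0"

definition to_local :: "frame \<Rightarrow> complex \<Rightarrow> complex" where
  "to_local F z = (case F of (a, org, b) \<Rightarrow> a * (if b then cnj (z - org) else z - org))"

definition from_local :: "frame \<Rightarrow> complex \<Rightarrow> complex" where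
  "from_local F w = (case F of (a, org, b) \<Rightarrow> org + (if b then cnj (w / a) else w / a))"

text \<open>An algorithm (the same for all robots): from the snapshot, i.e. the robot's own
  position in its local frame and the multiset of (local position, light) of the
  other robots it sees, compute a destination (local frame) and a new light colour.
  The robot does not see its own light.\<close>

type_synonym algorithm = "complex \<Rightarrow> (complex \<times> nat) multiset \<Rightarrow> complex \<times> nat"

type_synonym config = "(nat \<Rightarrow> complex) \<times> (nat \<Rightarrow> nat)"

definition visible :: "real \<Rightarrow> (nat \<Rightarrow> complex) \<Rightarrow> nat \<Rightarrow> nat set" where
  "visible V P i = {j \<in> robots - {i}. cmod (P j - P i) \<le> V}"

definition snapshot ::
  "(nat \<Rightarrow> frame) \<Rightarrow> real \<Rightarrow> config \<Rightarrow> nat \<Rightarrow> complex \<times> (complex \<times> nat) multiset" where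
  "snapshot F V c i = (case c of (P, L) \<Rightarrow>
     (to_local (F i) (P i),
      image_mset (\<lambda>j. (to_local (F i) (P j), L j)) (mset_set (visible V P i))))"

definition fsync_step :: "(nat \<Rightarrow> frame) \<Rightarrow> real \<Rightarrow> algorithm \<Rightarrow> config \<Rightarrow> config" where
  "fsync_step F V alg c =
     ((\<lambda>i. from_local (F i) (fst (case_prod alg (snapshot F V c i)))),
      (\<lambda>i. snd (case_prod alg (snapshot F V c i))))"

primrec exec :: "(nat \<Rightarrow> frame) \<Rightarrow> real \<Rightarrow> algorithm \<Rightarrow> config \<Rightarrow> nat \<Rightarrow> config" where
  "exec F V alg c0 0 = c0"
| "exec F V alg c0 (Suc t) = fsync_step F V alg (exec F V alg c0 t)"

definition vis_connected :: "real \<Rightarrow> (nat \<Rightarrow> complex) \<Rightarrow> bool" where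
  "vis_connected V P \<longleftrightarrow>
     (\<forall>i\<in>robots. \<forall>j\<in>robots.
        (\<lambda>x y. x \<in> robots \<and> y \<in> robots \<and> cmod (P x - P y) \<le> V)\<^sup>*\<^sup>* i j)"

text \<open>Initial positions: r1 at B, r2 at A, r3 at C where C is the reflection of B
  in A (so B, A, C are collinear with AB = AC = d = |B - A| > 0).\<close>

definition init_pos :: "complex \<Rightarrow> complex \<Rightarrow> nat \<Rightarrow> complex" where
  "init_pos A B i = (if i = 0 then B else if i = 1 then A else 2 * A - B)"

definition EqOsc :: "complex \<Rightarrow> complex \<Rightarrow> (nat \<Rightarrow> nat \<Rightarrow> complex) \<Rightarrow> bool" where
  "EqOsc A B P \<longleftrightarrow>
     (let C = 2 * A - B;
          B' = A + (2/3) * (B - A);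
          C' = A + (2/3) * (C - A)
      in (\<forall>t. P t 1 = A \<and> cmod (P t 0 - P t 1) = cmod (P t 2 - P t 1)) \<and>
         (\<forall>t. P t 0 = B \<and> P t 2 = C \<longrightarrow> (\<exists>t'>t. P t' 0 = B' \<and> P t' 2 = C')) \<and>
         (\<forall>t. P t 0 = B' \<and> P t 2 = C' \<longrightarrow> (\<exists>t''>t. P t'' 0 = B \<and> P t'' 2 = C)))"

text \<open>Solvability of EqOsc in FCOM, FSYNCH, limited visibility, by teams of three
  robots: one algorithm with finitely many colours and a fixed initial colour works
  for every team, i.e. every choice of local frames, visibility range, and initial
  placement, whenever the initial visibility graph is connected.\<close>

definition EqOsc_solvable_FCOM_FSYNCH_LV :: bool where
  "EqOsc_solvable_FCOM_FSYNCH_LV \<longleftrightarrow>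
     (\<exists>(Cols :: nat set) c0 (alg :: algorithm).
        finite Cols \<and> c0 \<in> Cols \<and> (\<forall>p M. snd (alg p M) \<in> Cols) \<and>
        (\<forall>(A :: complex) (B :: complex) (V :: real) (F :: nat \<Rightarrow> frame).
           B \<noteq> A \<and> V > 0 \<and> (\<forall>i\<in>robots. frame_ok (F i)) \<and> vis_connected V (init_pos A B) \<longrightarrow>
           EqOsc A B (\<lambda>t. fst (exec F V alg (init_pos A B, \<lambda>_. c0) t))))"

end

theory Submission
  imports Defs
begin

(*
  The robot r2 at A recognises itself as the exact midpoint of the two robots it sees and never
  moves.  It acts as a metronome, alternately showing the commands 1 (contract: the ends move to
  2/3 of their distance from A) and 2 (expand by the factor 3/2).  Each end robot obeys the
  command it sees on r2 and answers with 3 (contracted) or 4 (extended); r2 chooses its next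
  command from that answer.  Connectivity of the initial visibility graph forces d <= V, so r2 and
  each end always see each other; whether the two ends see each other is irrelevant, as neither
  shows a command and neither is the midpoint of the other two.  All moves are real affine
  combinations of positions, which every local frame (a similarity, possibly reflecting)
  preserves, so the robots act consistently although they share no coordinates or chirality.
*)

lemma from_local_to_local: "frame_ok F \<Longrightarrow> from_local F (to_local F z) = z"
  by (cases F) (auto simp: frame_ok_def from_local_def to_local_def)

lemma to_local_eq_iff: "frame_ok F \<Longrightarrow> to_local F x = to_local F y \<longleftrightarrow> x = y"
  by (metis from_local_to_local)

lemma to_local_affine:
  "to_local F (q + of_real r * (p - q)) = to_local F q + of_real r * (to_local F p - to_local F q)"
  by (cases F) (auto simp: to_local_def algebra_simps)

lemma to_local_midpoint_iff:
  assumes "frame_ok F"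
  shows "2 * to_local F z = to_local F x + to_local F y \<longleftrightarrow> 2 * z = x + y"
proof -
  have "2 * to_local F z = to_local F x + to_local F y \<longleftrightarrow>
        to_local F x + of_real 2 * (to_local F z - to_local F x) = to_local F y"
    by (auto simp: algebra_simps)
  also have "\<dots> \<longleftrightarrow> x + of_real 2 * (z - x) = y"
    by (simp only: to_local_affine [symmetric] to_local_eq_iff [OF assms])
  also have "\<dots> \<longleftrightarrow> 2 * z = x + y"
    by (auto simp: algebra_simps)
  finally show ?thesis .
qed

(* Ratio 1 for lights other than the commands makes the end rule uniform: an end robot that
   sees no command stays put. *)
definition move_ratio :: "nat \<Rightarrow> real" where
  "move_ratio m = (if m = 1 then 2/3 else if m = 2 then 3/2 else 1)"

definition end_light :: "nat \<Rightarrow> nat" where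
  "end_light m = (if m = 1 then 3 else 4)"

definition eqosc_alg :: algorithm where
  "eqosc_alg p M =
    (if size M = 2 \<and> 2 * p = sum_mset (image_mset fst M)
     then (p, if \<exists>x\<in>#M. snd x = 4 then 2 else 1)
     else if \<exists>x\<in>#M. snd x \<in> {1, 2}
     then (case SOME x. x \<in># M \<and> snd x \<in> {1, 2} of
             (q, m) \<Rightarrow> (q + of_real (move_ratio m) * (p - q), end_light m))
     else (p, 4))"

lemma eqosc_alg_middle:
  assumes "2 * p = q + r"
  shows "eqosc_alg p {#(q, e), (r, e')#} = (p, if e = 4 \<or> e' = 4 then 2 else 1)"
  using assms unfolding eqosc_alg_def by auto

lemma eqosc_alg_end:
  assumes "N = {#} \<or> N = {#(r, e)#} \<and> 2 * p \<noteq> q + r \<and> e \<notin> {1, 2}"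
  shows "eqosc_alg p (add_mset (q, m) N) = (q + of_real (move_ratio m) * (p - q), end_light m)"
proof (cases "m \<in> {1, 2}")
  case True
  then have "(SOME x. x \<in># add_mset (q, m) N \<and> snd x \<in> {1, 2}) = (q, m)"
    using assms by (intro some_equality) auto
  then show ?thesis
    using assms True unfolding eqosc_alg_def by auto
next
  case False
  then show ?thesis
    using assms unfolding eqosc_alg_def by (auto simp: move_ratio_def end_light_def)
qed

definition side :: "nat \<Rightarrow> real" where
  "side i = (if i = 0 then 1 else if i = 1 then 0 else -1)"

definition line_config :: "complex \<Rightarrow> complex \<Rightarrow> real \<Rightarrow> nat \<Rightarrow> complex" where
  "line_config A B s i = A + of_real (s * side i) * (B - A)"

lemma init_pos_eq_line_config: "init_pos A B = line_config A B 1"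
  by (auto simp: fun_eq_iff init_pos_def line_config_def side_def)

lemma norm_line_config_diff:
  "cmod (line_config A B s j - line_config A B s i) = \<bar>s\<bar> * \<bar>side j - side i\<bar> * cmod (B - A)"
proof -
  have "line_config A B s j - line_config A B s i = of_real (s * (side j - side i)) * (B - A)"
    by (simp add: line_config_def algebra_simps)
  then show ?thesis
    by (simp only: norm_mult norm_of_real abs_mult)
qed

lemma visible_line_config:
  "visible V (line_config A B s) i =
     {j \<in> robots - {i}. \<bar>s\<bar> * \<bar>side j - side i\<bar> * cmod (B - A) \<le> V}"
  by (simp add: visible_def norm_line_config_diff)

lemma snapshot_line_config_middle:
  assumes "0 \<le> s" "s * cmod (B - A) \<le> V"
  shows "snapshot F V (line_config A B s, L) 1 =
    (to_local (F 1) A,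
     {#(to_local (F 1) (line_config A B s 0), L 0), (to_local (F 1) (line_config A B s 2), L 2)#})"
proof -
  have "visible V (line_config A B s) 1 = {0, 2}"
    using assms by (auto simp: visible_line_config robots_def side_def)
  then show ?thesis
    by (simp add: snapshot_def line_config_def side_def)
qed

lemma snapshot_line_config_end:
  assumes "0 \<le> s" "s * cmod (B - A) \<le> V" and ik: "i = 0 \<and> k = 2 \<or> i = 2 \<and> k = 0"
  shows "snapshot F V (line_config A B s, L) i =
    (to_local (F i) (line_config A B s i),
     add_mset (to_local (F i) A, L 1)
       (if 2 * s * cmod (B - A) \<le> V then {#(to_local (F i) (line_config A B s k), L k)#} else {#}))"
proof -
  have "visible V (line_config A B s) i = (if 2 * s * cmod (B - A) \<le> V then {1, k} else {1})"
    using assms by (auto simp: visible_line_config robots_def side_def)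
  then show ?thesis
    using ik by (auto simp: snapshot_def line_config_def side_def)
qed

lemma eqosc_alg_line_config_middle:
  assumes "frame_ok (F 1)" "0 \<le> s" "s * cmod (B - A) \<le> V"
  shows "case_prod eqosc_alg (snapshot F V (line_config A B s, L) 1) =
           (to_local (F 1) A, if L 0 = 4 \<or> L 2 = 4 then 2 else 1)"
proof -
  have "2 * A = line_config A B s 0 + line_config A B s 2"
    by (simp add: line_config_def side_def)
  then have "2 * to_local (F 1) A =
               to_local (F 1) (line_config A B s 0) + to_local (F 1) (line_config A B s 2)"
    using to_local_midpoint_iff [OF assms(1)] by blast
  then show ?thesis
    unfolding snapshot_line_config_middle [OF assms(2,3)] by (simp add: eqosc_alg_middle)
qed

lemma eqosc_alg_line_config_end:
  assumes "frame_ok (F i)" "0 < s" "s * cmod (B - A) \<le> V" "B \<noteq> A"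
    and ik: "i = 0 \<and> k = 2 \<or> i = 2 \<and> k = 0" and "L k \<notin> {1, 2}"
  shows "case_prod eqosc_alg (snapshot F V (line_config A B s, L) i) =
           (to_local (F i) (line_config A B (move_ratio (L 1) * s) i), end_light (L 1))"
proof -
  let ?loc = "to_local (F i)"
  have "2 * line_config A B s i \<noteq> A + line_config A B s k"
    using ik assms(2,4) by (auto simp: line_config_def side_def algebra_simps)
  then have not_mid: "2 * ?loc (line_config A B s i) \<noteq> ?loc A + ?loc (line_config A B s k)"
    using to_local_midpoint_iff [OF assms(1)] by blast
  have "line_config A B (move_ratio (L 1) * s) i =
          A + of_real (move_ratio (L 1)) * (line_config A B s i - A)"
    by (simp add: line_config_def algebra_simps)
  then have "?loc (line_config A B (move_ratio (L 1) * s) i) =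
               ?loc A + of_real (move_ratio (L 1)) * (?loc (line_config A B s i) - ?loc A)"
    by (simp add: to_local_affine)
  then show ?thesis
    using assms not_mid by (simp add: snapshot_line_config_end eqosc_alg_end)
qed

(* Positions and lights are functions on all of nat, but only 0, 1, 2 are robots; fsync_step
   computes junk elsewhere, so configurations are compared on robots only. *)
definition agree_on_robots :: "config \<Rightarrow> config \<Rightarrow> bool" where
  "agree_on_robots c c' \<longleftrightarrow> (\<forall>i\<in>robots. fst c i = fst c' i \<and> snd c i = snd c' i)"

lemma agree_on_robots_trans:
  "agree_on_robots c c' \<Longrightarrow> agree_on_robots c' c'' \<Longrightarrow> agree_on_robots c c''"
  by (simp add: agree_on_robots_def)

lemma snapshot_cong:
  assumes "agree_on_robots c c'" "i \<in> robots"
  shows "snapshot F V c i = snapshot F V c' i"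
proof -
  obtain P L P' L' where c: "c = (P, L)" "c' = (P', L')"
    by fastforce
  have "visible V P i = visible V P' i"
    using assms c by (auto simp: agree_on_robots_def visible_def)
  moreover have "visible V P' i \<subseteq> robots" "finite (visible V P' i)"
    by (auto simp: visible_def robots_def)
  ultimately show ?thesis
    using assms c by (auto simp: snapshot_def agree_on_robots_def intro!: image_mset_cong)
qed

lemma fsync_step_cong:
  assumes "agree_on_robots c c'"
  shows "agree_on_robots (fsync_step F V alg c) (fsync_step F V alg c')"
  using snapshot_cong [OF assms] by (simp add: agree_on_robots_def fsync_step_def)

lemma fsync_step_line_config:
  assumes ok: "\<forall>i\<in>robots. frame_ok (F i)" and "B \<noteq> A" "cmod (B - A) \<le> V" "0 < s" "s \<le> 1"
    and "L 0 = e" "L 2 = e" "e \<notin> {1, 2}"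
  shows "agree_on_robots (fsync_step F V eqosc_alg (line_config A B s, L))
           (line_config A B (move_ratio (L 1) * s),
            \<lambda>i. if i = 1 then if e = 4 then 2 else 1 else end_light (L 1))"
proof -
  let ?c = "fsync_step F V eqosc_alg (line_config A B s, L)"
  have sV: "s * cmod (B - A) \<le> V"
    using assms(3-5) by (meson mult_left_le_one_le norm_ge_zero order_trans less_imp_le)
  have middle: "fst ?c 1 = A \<and> snd ?c 1 = (if e = 4 then 2 else 1)"
    using assms sV eqosc_alg_line_config_middle [of F s B A V L]
    by (simp add: fsync_step_def from_local_to_local robots_def)
  have ends: "fst ?c i = line_config A B (move_ratio (L 1) * s) i \<and> snd ?c i = end_light (L 1)"
    if ik: "i = 0 \<and> k = 2 \<or> i = 2 \<and> k = 0" for i k :: nat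
  proof -
    have "frame_ok (F i)" "L k \<notin> {1, 2}"
      using ok ik assms(6-8) by (auto simp: robots_def)
    then show ?thesis
      using assms sV ik eqosc_alg_line_config_end [of F i s B A V k L]
      by (simp add: fsync_step_def from_local_to_local)
  qed
  show ?thesis
    using middle ends [of 0 2] ends [of 2 0]
    by (auto simp: agree_on_robots_def robots_def line_config_def side_def)
qed

definition osc_scale :: "nat \<Rightarrow> real" where
  "osc_scale t = (if t \<noteq> 0 \<and> even t then 2/3 else 1)"

definition osc_light :: "nat \<Rightarrow> nat \<Rightarrow> nat" where
  "osc_light t i =
     (if t = 0 then 0 else if odd t then if i = 1 then 1 else 4 else if i = 1 then 2 else 3)"

lemma exec_eqosc_alg:
  assumes "\<forall>i\<in>robots. frame_ok (F i)" "B \<noteq> A" "cmod (B - A) \<le> V"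
  shows "agree_on_robots (exec F V eqosc_alg (init_pos A B, \<lambda>_. 0) t)
           (line_config A B (osc_scale t), osc_light t)"
proof (induction t)
  case 0
  show ?case
    by (simp add: agree_on_robots_def init_pos_eq_line_config osc_scale_def osc_light_def)
next
  case (Suc t)
  have "agree_on_robots (fsync_step F V eqosc_alg (line_config A B (osc_scale t), osc_light t))
          (line_config A B (osc_scale (Suc t)), osc_light (Suc t))"
  proof -
    have "move_ratio (osc_light t 1) * osc_scale t = osc_scale (Suc t)"
      by (simp add: move_ratio_def osc_light_def osc_scale_def)
    moreover have "(\<lambda>i. if i = 1 then if osc_light t 0 = 4 then 2 else 1 else end_light (osc_light t 1))
                     = osc_light (Suc t)"
      by (auto simp: fun_eq_iff osc_light_def end_light_def)
    ultimately show ?thesis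
      using fsync_step_line_config [OF assms, of "osc_scale t" "osc_light t" "osc_light t 0"]
      by (simp add: osc_scale_def osc_light_def)
  qed
  then show ?case
    using Suc.IH by (auto intro: agree_on_robots_trans fsync_step_cong)
qed

lemma vis_connected_init_pos_imp_le:
  assumes "vis_connected V (init_pos A B)"
  shows "cmod (B - A) \<le> V"
proof (rule ccontr)
  assume far: "\<not> cmod (B - A) \<le> V"
  let ?R = "\<lambda>x y. x \<in> robots \<and> y \<in> robots \<and> cmod (init_pos A B x - init_pos A B y) \<le> V"
  have "\<not> 2 * cmod (B - A) \<le> V"
    using far norm_ge_zero [of "B - A"] by linarith
  with far have no_edge: "?R x y \<Longrightarrow> x = y" for x y
    by (auto simp: init_pos_eq_line_config norm_line_config_diff robots_def side_def)
  have "?R\<^sup>*\<^sup>* x y \<Longrightarrow> x = y" for x y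
    by (induction rule: rtranclp_induct) (auto intro: no_edge)
  moreover have "?R\<^sup>*\<^sup>* 0 1"
    using assms by (simp add: vis_connected_def robots_def)
  ultimately have "(0::nat) = 1"
    by blast
  then show False
    by simp
qed

lemma EqOsc_if_osc_scale:
  assumes "\<And>t i. i \<in> robots \<Longrightarrow> P t i = line_config A B (osc_scale t) i"
  shows "EqOsc A B P"
proof -
  have P: "P t 0 = A + of_real (osc_scale t) * (B - A)"
          "P t 1 = A"
          "P t 2 = A - of_real (osc_scale t) * (B - A)" for t
    using assms [of 0 t] assms [of 1 t] assms [of 2 t]
    by (simp_all add: robots_def line_config_def side_def)
  show ?thesis
    unfolding EqOsc_def Let_def
  proof (intro conjI allI impI)
    fix t
    show "P t 1 = A"
      by (fact P)
    show "cmod (P t 0 - P t 1) = cmod (P t 2 - P t 1)"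
      unfolding P by simp
    show "\<exists>t'>t. P t' 0 = A + 2/3 * (B - A) \<and> P t' 2 = A + 2/3 * (2 * A - B - A)"
      by (rule exI [of _ "2 * t + 2"]) (simp add: P osc_scale_def field_simps)
    show "\<exists>t''>t. P t'' 0 = B \<and> P t'' 2 = 2 * A - B"
      by (rule exI [of _ "2 * t + 1"]) (simp add: P osc_scale_def algebra_simps)
  qed
qed

theorem lemma5:
  shows "EqOsc_solvable_FCOM_FSYNCH_LV"
  unfolding EqOsc_solvable_FCOM_FSYNCH_LV_def
proof (intro exI conjI allI impI)
  show "finite {0::nat, 1, 2, 3, 4}" "(0::nat) \<in> {0, 1, 2, 3, 4}"
    by simp_all
  show "snd (eqosc_alg p M) \<in> {0, 1, 2, 3, 4}" for p M
    unfolding eqosc_alg_def end_light_def by (auto split: prod.split)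
  fix A B :: complex and V :: real and F :: "nat \<Rightarrow> frame"
  assume "B \<noteq> A \<and> 0 < V \<and> (\<forall>i\<in>robots. frame_ok (F i)) \<and> vis_connected V (init_pos A B)"
  then have "agree_on_robots (exec F V eqosc_alg (init_pos A B, \<lambda>_. 0) t)
               (line_config A B (osc_scale t), osc_light t)" for t
    using exec_eqosc_alg vis_connected_init_pos_imp_le by blast
  then show "EqOsc A B (\<lambda>t. fst (exec F V eqosc_alg (init_pos A B, \<lambda>_. 0) t))"
    by (intro EqOsc_if_osc_scale) (simp add: agree_on_robots_def)
qed

end
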